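(* Let $\beta>0$ be a constant and let $x_{1:n}\in\mathcal X^n$ ($n\ge 1$) be any sequence, with used alphabet $\mathcal A$ of size $m$ and counts $n_j$. Then the redundancy of $S^\beta$ satisfies the exact identity $$R^\beta_S(x_{1:n}) = \mathrm{CL}_w(\mathcal A) - m\ln\beta + \sum_{j\in\mathcal A}\ln\frac{n_j^{n_j}}{\Gamma(n_j)} + \ln\frac{\Gamma(n+\beta)}{n^n\,\Gamma(\beta)},$$ and the upper bound $R^\beta_S(x_{1:n})\le \overline R^\beta_S$, where $$\overline R^\beta_S := \mathrm{CL}_w(\mathcal A) - m\ln\beta + \sum_{j\in\mathcal A}\tfrac12\ln\frac{n_j}{2\pi} + n\ln\Big(1+\frac{\beta}{n}\Big) + \Big(\beta-\tfrac12\Big)\ln\Big(\frac{n}{\beta}+1\Big) + \big(1-\ln\sqrt{2\pi}\big).$$ If moreover $\beta\ge 1$, then also $R^\beta_S(x_{1:n})\ge \overline R^\beta_S - (1-\ln\sqrt{2\pi})(m+2)$.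
   Context: Let $\mathcal X$ be a finite base alphabet with $D=|\mathcal X|$. For a sequence $x_{1:n}=(x_1,\dots,x_n)\in\mathcal X^n$, let $n_i$ be the number of occurrences of $i$ in $x_{1:n}$, $\mathcal A=\{x_1,\dots,x_n\}$ the set of used symbols and $m=|\mathcal A|$. For $0\le t\le n$ let $\mathcal A_t=\{x_1,\dots,x_t\}$ ($\mathcal A_0=\emptyset$), $m_t=|\mathcal A_t|$, and $n^t_i$ the number of occurrences of $i$ in $x_{1:t}$. New-symbol weights: for each $t$ and each $i\in\mathcal X\setminus\mathcal A_t$ a number $w^t_i>0$ with $\sum_{k\in\mathcal X\setminus\mathcal A_t}w^t_k\le 1$. For a constant $\beta>0$ the model $S^\beta$ is defined by $S^\beta(x_{t+1}=i\mid x_{1:t})=n^t_i/(t+\beta)$ if $n^t_i>0$ and $=\beta w^t_i/(t+\beta)$ if $n^t_i=0$ ($t=0,\dots,n-1$), and $S^\beta(x_{1:n})=\prod_{t=0}^{n-1}S^\beta(x_{t+1}\mid x_{1:t})$. Define $\mathrm{CL}_w(\mathcal A):=\sum_{t\in\{0,\dots,n-1\}:\,x_{t+1}\notin\mathcal A_t}\ln(1/w^t_{x_{t+1}})$. The redundancy of a (sub)probability $Q$ on sequences relative to the i.i.d. class is $R_Q(x_{1:n}) := \ln\frac{\max_{\theta}\prod_{t=1}^n\theta_{x_t}}{Q(x_{1:n})} = \ln\frac{n^{-n}\prod_{j\in\mathcal A}n_j^{n_j}}{Q(x_{1:n})}$, the max over probability vectors $\theta$ on $\mathcal X$; $R^\beta_S:=R_{S^\beta}$.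 All logarithms are natural. *)

theory Defs
  imports "HOL-Analysis.Analysis"
begin

text \<open>Base alphabet = the finite type 'a. A sequence x_{1:n} is a list xs with length n;
  x_{t+1} = xs ! t. The weights w t i stand for w^t_i.\<close>

definition cnt :: "'a list \<Rightarrow> 'a \<Rightarrow> nat" where
  "cnt xs i = count_list xs i"

definition S_cond :: "real \<Rightarrow> (nat \<Rightarrow> 'a \<Rightarrow> real) \<Rightarrow> 'a list \<Rightarrow> nat \<Rightarrow> 'a \<Rightarrow> real" where
  "S_cond \<beta> w xs t i =
     (if cnt (take t xs) i > 0 then real (cnt (take t xs) i) / (real t + \<beta>)
      else \<beta> * w t i / (real t + \<beta>))"

definition S_prob :: "real \<Rightarrow> (nat \<Rightarrow> 'a \<Rightarrow> real) \<Rightarrow> 'a list \<Rightarrow> real" where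
  "S_prob \<beta> w xs = (\<Prod>t<length xs. S_cond \<beta> w xs t (xs ! t))"

definition CL :: "(nat \<Rightarrow> 'a \<Rightarrow> real) \<Rightarrow> 'a list \<Rightarrow> real" where
  "CL w xs = (\<Sum>t\<in>{t. t < length xs \<and> xs ! t \<notin> set (take t xs)}. ln (1 / w t (xs ! t)))"

definition valid_weights :: "(nat \<Rightarrow> 'a::finite \<Rightarrow> real) \<Rightarrow> nat \<Rightarrow> 'a list \<Rightarrow> bool" where
  "valid_weights w n xs \<longleftrightarrow>
     (\<forall>t\<le>n. (\<forall>i. i \<notin> set (take t xs) \<longrightarrow> w t i > 0) \<and>
            (\<Sum>k\<in>UNIV - set (take t xs). w t k) \<le> 1)"

definition prob_vecs :: "('a::finite \<Rightarrow> real) set" where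
  "prob_vecs = {\<theta>. (\<forall>i. \<theta> i \<ge> 0) \<and> (\<Sum>i\<in>UNIV. \<theta> i) = 1}"

definition max_lik :: "'a::finite list \<Rightarrow> real" where
  "max_lik xs = (SUP \<theta>\<in>prob_vecs. \<Prod>t<length xs. \<theta> (xs ! t))"

definition redundancy :: "('a::finite list \<Rightarrow> real) \<Rightarrow> 'a list \<Rightarrow> real" where
  "redundancy Q xs = ln (max_lik xs / Q xs)"

end

theory Submission
  imports Defs "HOL-Real_Asymp.Real_Asymp"
begin

text \<open>
  Let \<open>F(x) = ln \<Gamma>(x) - ((x - 1/2) ln x - x)\<close> (\<open>stirling_gap\<close> below). The conditional probabilities of \<open>S\<^sup>\<beta>\<close>
  multiply out to \<open>\<beta>\<^sup>m \<Prod> w \<Prod>\<^sub>j \<Gamma>(n\<^sub>j) \<Gamma>(\<beta>) / \<Gamma>(n + \<beta>)\<close>, and by Gibbs' inequality the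
  maximum i.i.d. likelihood is \<open>\<Prod>\<^sub>j (n\<^sub>j/n)\<^bsup>n\<^sub>j\<^esup>\<close>; taking logarithms gives the exact identity.
  Rewritten with \<open>F\<close>, the redundancy equals the bound plus
  \<open>-(1 - ln \<surd>(2\<pi>)) + \<Sum>\<^sub>j (ln \<surd>(2\<pi>) - F(n\<^sub>j)) + F(n + \<beta>) - F(\<beta>)\<close>,
  so both bounds follow from three Stirling-type facts: \<open>F\<close> is decreasing on \<open>(0, \<infinity>)\<close>,
  \<open>F(1) = 1\<close>, and \<open>F \<ge> ln \<surd>(2\<pi>)\<close>. These come from the increments
  \<open>F(y) - F(y + 1) = (y + 1/2) ln (1 + 1/y) - 1\<close>, which lie in \<open>[0, 1/(4y(y+1))]\<close> and decrease
  in \<open>y\<close>; the limit \<open>ln \<surd>(2\<pi>)\<close> of \<open>F\<close> at infinity is identified with the Legendre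
  duplication formula.
\<close>

section \<open>Logarithmic estimates for the increments of Stirling's remainder\<close>

lemma ln_one_plus_lower:
  fixes u :: real assumes "0 \<le> u" shows "2 * u \<le> (2 + u) * ln (1 + u)"
proof -
  let ?g = "\<lambda>x::real. ln (1 + x) - 2 * x / (2 + x)"
  have "?g 0 \<le> ?g u"
  proof (rule deriv_nonneg_imp_mono[where g = ?g and g' = "\<lambda>x. 1 / (1 + x) - 4 / (2 + x)^2"])
    fix x :: real assume "x \<in> {0..u}"
    then have x: "0 \<le> x" by simp
    then show "(?g has_real_derivative 1 / (1 + x) - 4 / (2 + x)^2) (at x)"
      by (auto intro!: derivative_eq_intros simp: field_simps power2_eq_square)
    have "4 * (1 + x) \<le> (2 + x)^2" by (simp add: power2_eq_square algebra_simps)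
    then show "0 \<le> 1 / (1 + x) - 4 / (2 + x)^2" using x by (simp add: field_simps)
  qed (use assms in simp)
  then show ?thesis using assms by (simp add: field_simps)
qed

lemma ln_one_plus_upper:
  fixes u :: real assumes "0 \<le> u" shows "2 * (1 + u) * ln (1 + u) \<le> u * (u + 2)"
proof -
  let ?g = "\<lambda>x::real. x * (x + 2) - 2 * (1 + x) * ln (1 + x)"
  have "?g 0 \<le> ?g u"
  proof (rule deriv_nonneg_imp_mono[where g = ?g and g' = "\<lambda>x. 2 * x - 2 * ln (1 + x)"])
    fix x :: real assume "x \<in> {0..u}"
    then have x: "0 \<le> x" by simp
    have "2 / (1 + x) + x * 2 / (1 + x) = 2"
      using x by (simp add: add_divide_distrib[symmetric] field_simps)
    then show "(?g has_real_derivative 2 * x - 2 * ln (1 + x)) (at x)"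
      using x by (auto intro!: derivative_eq_intros simp: algebra_simps)
    show "0 \<le> 2 * x - 2 * ln (1 + x)" using ln_add_one_self_le_self[OF x] by simp
  qed (use assms in simp)
  then show ?thesis by simp
qed

lemma ln_ratio_succ:
  fixes y :: real assumes "0 < y" shows "ln (y + 1) - ln y = ln (1 + 1 / y)"
proof -
  have "1 + 1 / y = (y + 1) / y" using assms by (simp add: field_simps)
  then show ?thesis using assms by (simp add: ln_div)
qed

lemma ln_ratio_succ_lower:
  fixes y :: real assumes y: "0 < y" shows "2 \<le> (2 * y + 1) * (ln (y + 1) - ln y)"
proof -
  define L where "L = ln (y + 1) - ln y"
  have "2 = y * (2 * (1 / y))" using y by simp
  also have "\<dots> \<le> y * ((2 + 1 / y) * L)"
    unfolding L_def ln_ratio_succ[OF y] using y by (intro mult_left_mono ln_one_plus_lower) auto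
  also have "\<dots> = (2 * y + 1) * L" using y by (simp add: field_simps)
  finally show ?thesis unfolding L_def .
qed

lemma ln_ratio_succ_upper:
  fixes y :: real assumes y: "0 < y" shows "2 * y * (y + 1) * (ln (y + 1) - ln y) \<le> 2 * y + 1"
proof -
  define L where "L = ln (y + 1) - ln y"
  have "2 * y * (y + 1) * L = y^2 * (2 * (1 + 1 / y) * L)" using y by (simp add: field_simps power2_eq_square)
  also have "\<dots> \<le> y^2 * (1 / y * (1 / y + 2))"
    unfolding L_def ln_ratio_succ[OF y] using y by (intro mult_left_mono ln_one_plus_upper) auto
  also have "\<dots> = 2 * y + 1" using y by (simp add: field_simps power2_eq_square)
  finally show ?thesis unfolding L_def .
qed

definition stirling_step :: "real \<Rightarrow> real" where
  "stirling_step y = (y + 1/2) * (ln (y + 1) - ln y) - 1"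

lemma stirling_step_nonneg: "0 < y \<Longrightarrow> 0 \<le> stirling_step y"
  using ln_ratio_succ_lower[of y] by (simp add: stirling_step_def algebra_simps)

lemma stirling_step_le: assumes y: "0 < y" shows "stirling_step y \<le> 1 / (4 * y) - 1 / (4 * (y + 1))"
proof -
  define L where "L = ln (y + 1) - ln y"
  have "(2 * y + 1) * (2 * y * (y + 1) * L) \<le> (2 * y + 1) * (2 * y + 1)"
    unfolding L_def using ln_ratio_succ_upper[OF y] y by (intro mult_left_mono) auto
  then have "((y + 1/2) * L - 1) * (4 * y * (y + 1)) \<le> 1" by (simp add: algebra_simps)
  then have "(y + 1/2) * L - 1 \<le> 1 / (4 * y * (y + 1))" using y by (simp add: pos_le_divide_eq)
  moreover have "1 / (4 * y) - 1 / (4 * (y + 1)) = 1 / (4 * y * (y + 1))" using y by (simp add: field_simps)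
  ultimately show ?thesis unfolding stirling_step_def L_def[symmetric] by simp
qed

lemma stirling_step_antimono:
  assumes "0 < x" "x \<le> y" shows "stirling_step y \<le> stirling_step x"
proof (rule deriv_nonpos_imp_antimono[where g = stirling_step and g' = "\<lambda>z. (ln (z + 1) - ln z) + (z + 1/2) * (1 / (z + 1) - 1 / z)"])
  fix z assume "z \<in> {x..y}"
  then have z: "0 < z" using assms by simp
  then show "(stirling_step has_real_derivative (ln (z + 1) - ln z) + (z + 1/2) * (1 / (z + 1) - 1 / z)) (at z)"
    unfolding stirling_step_def[abs_def] by (auto intro!: derivative_eq_intros simp: divide_simps)
  have "(z + 1/2) * (1 / (z + 1) - 1 / z) = - ((2 * z + 1) / (2 * z * (z + 1)))"
    using z by (simp add: field_simps)
  moreover have "ln (z + 1) - ln z \<le> (2 * z + 1) / (2 * z * (z + 1))"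
    using ln_ratio_succ_upper[OF z] z by (simp add: pos_le_divide_eq mult.commute)
  ultimately show "(ln (z + 1) - ln z) + (z + 1/2) * (1 / (z + 1) - 1 / z) \<le> 0" by simp
qed (use assms in simp)

section \<open>Stirling's remainder\<close>

definition stirling_gap :: "real \<Rightarrow> real" where
  "stirling_gap x = ln (Gamma x) - ((x - 1/2) * ln x - x)"

lemma stirling_gap_one: "stirling_gap 1 = 1"
  by (simp add: stirling_gap_def)

lemma stirling_gap_diff_succ:
  assumes x: "0 < x" shows "stirling_gap x - stirling_gap (x + 1) = stirling_step x"
proof -
  have "Gamma (x + 1) = x * Gamma x" using x by (intro Gamma_plus1) (auto simp: nonpos_Ints_def)
  moreover have "0 < Gamma x" using x by simp
  ultimately have "ln (Gamma (x + 1)) = ln x + ln (Gamma x)" using x by (simp add: ln_mult_pos)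
  then show ?thesis unfolding stirling_gap_def stirling_step_def by (simp add: algebra_simps)
qed

lemma stirling_gap_diff_Suc:
  assumes "0 < x"
  shows "stirling_gap (x + real n) - stirling_gap (x + real (Suc n)) = stirling_step (x + real n)"
proof -
  have "0 < x + real n" using assms by simp
  from stirling_gap_diff_succ[OF this] show ?thesis by (simp only: of_nat_Suc add_ac)
qed

lemma stirling_gap_diff_shift:
  assumes "0 < x"
  shows "stirling_gap x - stirling_gap (x + real n) = (\<Sum>k<n. stirling_step (x + real k))"
proof (induction n)
  case (Suc n)
  then show ?case using stirling_gap_diff_Suc[OF assms, of n] by simp
qed simp

lemma stirling_gap_shift_lower_bound:
  assumes x: "0 < x" shows "stirling_gap x - 1 / (4 * x) \<le> stirling_gap (x + real n)"
proof -
  have "stirling_step (x + real k) \<le> 1 / (4 * (x + real k)) - 1 / (4 * (x + real (Suc k)))" for k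
  proof -
    have "0 < x + real k" using x by simp
    from stirling_step_le[OF this] show ?thesis by (simp only: of_nat_Suc add_ac)
  qed
  then have "(\<Sum>k<n. stirling_step (x + real k))
      \<le> (\<Sum>k<n. 1 / (4 * (x + real k)) - 1 / (4 * (x + real (Suc k))))"
    by (intro sum_mono)
  also have "\<dots> = 1 / (4 * x) - 1 / (4 * (x + real n))"
    by (subst sum_lessThan_telescope') simp
  also have "\<dots> \<le> 1 / (4 * x)" using x by simp
  finally show ?thesis using stirling_gap_diff_shift[OF x, of n] by linarith
qed

lemma convergent_stirling_gap_shift:
  assumes x: "0 < x" shows "convergent (\<lambda>n. stirling_gap (x + real n))"
proof -
  have "decseq (\<lambda>n. stirling_gap (x + real n))"
  proof (rule decseq_SucI)
    fix n
    show "stirling_gap (x + real (Suc n)) \<le> stirling_gap (x + real n)"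
      using stirling_gap_diff_Suc[OF x, of n] stirling_step_nonneg[of "x + real n"] x by simp
  qed
  then show ?thesis
    using decseq_convergent[of _ "stirling_gap x - 1 / (4 * x)"] stirling_gap_shift_lower_bound[OF x]
    by (blast intro: convergentI)
qed

lemma ln_Gamma_shift_asymp:
  fixes x :: real assumes x: "0 < x"
  shows "(\<lambda>n. ln (Gamma (real n + 1)) + x * ln (real n) - ln (Gamma (x + real n + 1))) \<longlonglongrightarrow> 0"
proof -
  have x': "x \<notin> \<int>\<^sub>\<le>\<^sub>0" using x by (auto simp: nonpos_Ints_def)
  have "Gamma x \<noteq> 0" using Gamma_real_pos[OF x] by simp
  have "(\<lambda>n. ln (Gamma_series x n / Gamma x)) \<longlonglongrightarrow> ln (Gamma x / Gamma x)"
    using \<open>Gamma x \<noteq> 0\<close> by (intro tendsto_intros) auto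
  then have lim: "(\<lambda>n. ln (Gamma_series x n / Gamma x)) \<longlonglongrightarrow> 0"
    using \<open>Gamma x \<noteq> 0\<close> by simp
  have "ln (Gamma_series x n / Gamma x) =
      ln (Gamma (real n + 1)) + x * ln (real n) - ln (Gamma (x + real n + 1))" if "0 < n" for n
  proof -
    have "pochhammer x (n + 1) = Gamma (x + real n + 1) / Gamma x"
      using pochhammer_Gamma[OF x'] by (simp add: add_ac)
    moreover have "fact n = Gamma (real n + 1)" using Gamma_fact[where 'a = real, of n] by (simp add: add.commute)
    ultimately have "Gamma_series x n / Gamma x = Gamma (real n + 1) * exp (x * ln (real n)) / Gamma (x + real n + 1)"
      unfolding Gamma_series_def using \<open>Gamma x \<noteq> 0\<close> by (simp add: field_simps)
    moreover have "0 < Gamma (real n + 1)" "0 < Gamma (x + real n + 1)" using x by simp_all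
    ultimately show ?thesis using that by (simp add: ln_mult_pos ln_div less_imp_neq[symmetric])
  qed
  then have ev: "eventually (\<lambda>n. ln (Gamma_series x n / Gamma x) =
      ln (Gamma (real n + 1)) + x * ln (real n) - ln (Gamma (x + real n + 1))) sequentially"
    by (intro eventually_mono[OF eventually_gt_at_top[of "0::nat"]])
  show ?thesis using tendsto_cong[OF ev] lim by simp
qed

lemma stirling_gap_shift_diff_tendsto_0:
  assumes x: "0 < x"
  shows "(\<lambda>n. stirling_gap (x + real n + 1) - stirling_gap (real n + 1)) \<longlonglongrightarrow> 0"
proof -
  have "(\<lambda>n::nat. x * ln (real n) - (x + real n + 1/2) * ln (x + real n + 1)
       + (real n + 1/2) * ln (real n + 1) + x) \<longlonglongrightarrow> 0"
    using x by real_asymp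
  from tendsto_diff[OF this ln_Gamma_shift_asymp[OF x]] show ?thesis
    by (simp add: stirling_gap_def algebra_simps)
qed

lemma Gamma_legendre_duplication_real:
  fixes y :: real assumes y: "0 < y"
  shows "Gamma y * Gamma (y + 1/2) = exp ((1 - 2 * y) * ln 2) * sqrt pi * Gamma (2 * y)"
proof -
  have "y \<notin> \<int>\<^sub>\<le>\<^sub>0" "y + 1/2 \<notin> \<int>\<^sub>\<le>\<^sub>0" using y by (auto simp: nonpos_Ints_def)
  then have "complex_of_real y \<notin> \<int>\<^sub>\<le>\<^sub>0" "complex_of_real (y + 1/2) \<notin> \<int>\<^sub>\<le>\<^sub>0"
    using of_real_in_nonpos_Ints_iff by blast+
  then have "complex_of_real y \<notin> \<int>\<^sub>\<le>\<^sub>0" "complex_of_real y + 1/2 \<notin> \<int>\<^sub>\<le>\<^sub>0"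
    by simp_all
  from Gamma_legendre_duplication[OF this]
  have "complex_of_real (Gamma y * Gamma (y + 1/2)) =
      complex_of_real (exp ((1 - 2 * y) * ln 2) * sqrt pi * Gamma (2 * y))"
    by (simp flip: Gamma_complex_of_real exp_of_real)
  then show ?thesis by (simp only: of_real_eq_iff)
qed

lemma stirling_gap_duplication:
  assumes y: "0 < y"
  shows "stirling_gap y + stirling_gap (y + 1/2) - stirling_gap (2 * y)
    = ln (sqrt (2 * pi)) + (1/2 + y * ln y - y * ln (y + 1/2))"
proof -
  have "ln (Gamma y) + ln (Gamma (y + 1/2)) = (1 - 2 * y) * ln 2 + ln pi / 2 + ln (Gamma (2 * y))"
    using arg_cong[OF Gamma_legendre_duplication_real[OF y], of ln] y
    by (simp add: ln_mult_pos ln_sqrt)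
  moreover have "ln (2 * y) = ln 2 + ln y" "ln (sqrt (2 * pi)) = (ln 2 + ln pi) / 2"
    using y by (simp_all add: ln_mult_pos ln_sqrt)
  ultimately show ?thesis unfolding stirling_gap_def by (simp add: algebra_simps add_divide_distrib)
qed

lemma stirling_gap_tendsto:
  assumes x: "0 < x" shows "(\<lambda>n. stirling_gap (x + real n)) \<longlonglongrightarrow> ln (sqrt (2 * pi))"
proof -
  obtain l where l: "(\<lambda>n. stirling_gap (real n + 1)) \<longlonglongrightarrow> l"
    using convergent_stirling_gap_shift[of 1] by (auto simp: convergent_def add.commute)
  have shift: "(\<lambda>n. stirling_gap (z + real n)) \<longlonglongrightarrow> l" if z: "0 < z" for z
  proof -
    have "(\<lambda>n. (stirling_gap (z + real n + 1) - stirling_gap (real n + 1)) + stirling_gap (real n + 1))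
        \<longlonglongrightarrow> 0 + l"
      by (intro tendsto_add stirling_gap_shift_diff_tendsto_0 z l)
    then have "(\<lambda>n. stirling_gap (z + real (Suc n))) \<longlonglongrightarrow> l" by (simp add: add_ac)
    then show ?thesis by (rule LIMSEQ_imp_Suc)
  qed
  \<comment> \<open>The duplication formula along \<open>y = n + 1\<close> pins the common limit down.\<close>
  have "(\<lambda>m. stirling_gap (2 + real m)) \<longlonglongrightarrow> l" using shift[of 2] by simp
  then have "(\<lambda>n. stirling_gap (2 + real (2 * n))) \<longlonglongrightarrow> l"
    by (rule LIMSEQ_subseq_LIMSEQ[unfolded o_def]) (auto simp: strict_mono_def)
  then have double: "(\<lambda>n. stirling_gap (2 * (real n + 1))) \<longlonglongrightarrow> l" by (simp add: algebra_simps)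
  have half: "(\<lambda>n. stirling_gap (real n + 1 + 1/2)) \<longlonglongrightarrow> l"
    using shift[of "3/2"] by (simp add: add_ac)
  have "(\<lambda>n. stirling_gap (real n + 1) + stirling_gap (real n + 1 + 1/2) - stirling_gap (2 * (real n + 1)))
      \<longlonglongrightarrow> l + l - l"
    by (intro tendsto_intros l half double)
  moreover have "(\<lambda>n. stirling_gap (real n + 1) + stirling_gap (real n + 1 + 1/2) - stirling_gap (2 * (real n + 1)))
      = (\<lambda>n. ln (sqrt (2 * pi)) + (1/2 + (real n + 1) * ln (real n + 1) - (real n + 1) * ln (real n + 1 + 1/2)))"
    by (rule ext, rule stirling_gap_duplication) simp
  moreover have "(\<lambda>n::nat. ln (sqrt (2 * pi)) + (1/2 + (real n + 1) * ln (real n + 1)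
      - (real n + 1) * ln (real n + 1 + 1/2))) \<longlonglongrightarrow> ln (sqrt (2 * pi)) + 0"
    by (intro tendsto_intros) real_asymp
  ultimately have "l = ln (sqrt (2 * pi))" using LIMSEQ_unique by fastforce
  with shift[OF x] show ?thesis by simp
qed

lemma stirling_gap_lower_bound:
  assumes x: "0 < x" shows "ln (sqrt (2 * pi)) \<le> stirling_gap x"
proof (rule LIMSEQ_le_const2[OF stirling_gap_tendsto[OF x]])
  have "stirling_gap (x + real n) \<le> stirling_gap x" for n
  proof -
    have "0 \<le> (\<Sum>k<n. stirling_step (x + real k))"
      using x by (intro sum_nonneg stirling_step_nonneg) simp
    then show ?thesis using stirling_gap_diff_shift[OF x, of n] by linarith
  qed
  then show "\<exists>N. \<forall>n\<ge>N. stirling_gap (x + real n) \<le> stirling_gap x" by blast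
qed

lemma stirling_gap_antimono:
  assumes x: "0 < x" and xy: "x \<le> y" shows "stirling_gap y \<le> stirling_gap x"
proof -
  have y: "0 < y" using x xy by simp
  have "stirling_gap y - ln (sqrt (2 * pi)) \<le> stirling_gap x - ln (sqrt (2 * pi))"
  proof (rule LIMSEQ_le)
    show "(\<lambda>n. stirling_gap y - stirling_gap (y + real n)) \<longlonglongrightarrow> stirling_gap y - ln (sqrt (2 * pi))"
      by (intro tendsto_intros stirling_gap_tendsto y)
    show "(\<lambda>n. stirling_gap x - stirling_gap (x + real n)) \<longlonglongrightarrow> stirling_gap x - ln (sqrt (2 * pi))"
      by (intro tendsto_intros stirling_gap_tendsto x)
    show "\<exists>N. \<forall>n\<ge>N. stirling_gap y - stirling_gap (y + real n) \<le> stirling_gap x - stirling_gap (x + real n)"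
      unfolding stirling_gap_diff_shift[OF x] stirling_gap_diff_shift[OF y]
      using x xy by (auto intro!: sum_mono stirling_step_antimono)
  qed
  then show ?thesis by simp
qed

section \<open>The maximum i.i.d. likelihood\<close>

lemma prod_nth_eq_prod_count:
  "(\<Prod>t<length xs. f (xs ! t)) = (\<Prod>x\<in>set xs. f x ^ count_list xs x)"
proof -
  have "(\<Prod>t<length xs. f (xs ! t)) = prod_list (map f xs)"
    by (subst prod.list_conv_set_nth) (simp add: atLeast0LessThan)
  also have "\<dots> = prod_mset (image_mset f (mset xs))"
    by (simp flip: prod_mset_prod_list)
  also have "\<dots> = (\<Prod>x\<in>set xs. f x ^ count_list xs x)"
    by (simp add: image_prod_mset_multiplicity count_mset)
  finally show ?thesis .
qed

lemma gibbs_inequality: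
  fixes c \<theta> :: "'a \<Rightarrow> real"
  assumes A: "finite A" and c: "\<And>j. j \<in> A \<Longrightarrow> 0 < c j" and \<theta>: "\<And>j. j \<in> A \<Longrightarrow> 0 < \<theta> j"
    and \<theta>_sum: "sum \<theta> A \<le> 1"
  shows "(\<Sum>j\<in>A. c j * ln (\<theta> j)) \<le> (\<Sum>j\<in>A. c j * ln (c j / sum c A))"
proof -
  let ?C = "sum c A"
  have "c j * ln (\<theta> j) - c j * ln (c j / ?C) \<le> ?C * \<theta> j - c j" if j: "j \<in> A" for j
  proof -
    have "c j \<le> ?C" using A c j by (intro member_le_sum) (auto intro: less_imp_le)
    then have C: "0 < ?C" using c[OF j] by simp
    have "c j * ln (\<theta> j) - c j * ln (c j / ?C) = c j * ln (\<theta> j * ?C / c j)"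
      using c[OF j] \<theta>[OF j] C by (simp add: ln_div ln_mult_pos algebra_simps)
    also have "\<dots> \<le> c j * (\<theta> j * ?C / c j - 1)"
      using c[OF j] \<theta>[OF j] C by (intro mult_left_mono ln_le_minus_one) auto
    also have "\<dots> = ?C * \<theta> j - c j" using c[OF j] by (simp add: field_simps)
    finally show ?thesis .
  qed
  then have "(\<Sum>j\<in>A. c j * ln (\<theta> j) - c j * ln (c j / ?C)) \<le> (\<Sum>j\<in>A. ?C * \<theta> j - c j)"
    by (rule sum_mono)
  also have "\<dots> = ?C * (sum \<theta> A - 1)"
    by (simp add: sum_subtractf sum_distrib_left[symmetric] right_diff_distrib)
  also have "\<dots> \<le> 0"
    using \<theta>_sum c by (intro mult_nonneg_nonpos sum_nonneg) (auto intro: less_imp_le)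
  finally show ?thesis by (simp add: sum_subtractf)
qed

lemma count_list_pos: "x \<in> set xs \<Longrightarrow> 0 < count_list xs x"
  by (metis count_list_0_iff gr0I)

lemma sum_count_list_set: "(\<Sum>x\<in>set xs. real (count_list xs x)) = real (length xs)"
  using sum_count_set[of xs "set xs"] by (simp flip: of_nat_sum)

lemma max_lik_eq:
  fixes xs :: "'a::finite list"
  assumes "xs \<noteq> []"
  shows "max_lik xs = (\<Prod>j\<in>set xs. (real (count_list xs j) / real (length xs)) ^ count_list xs j)"
    (is "_ = ?R")
proof -
  let ?c = "\<lambda>j. real (count_list xs j)" and ?n = "real (length xs)"
  have n: "0 < ?n" using assms by simp
  have R: "0 < ?R" using n by (intro prod_pos) (simp add: count_list_pos)
  have lik: "(\<Prod>t<length xs. \<theta> (xs ! t)) = (\<Prod>j\<in>set xs. \<theta> j ^ count_list xs j)" for \<theta> :: "'a \<Rightarrow> real"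
    by (rule prod_nth_eq_prod_count)
  have "(\<Sum>j\<in>UNIV. ?c j) = ?n" using sum_count_set[of xs UNIV] by (simp flip: of_nat_sum)
  then have "(\<lambda>j. ?c j / ?n) \<in> prob_vecs"
    using n by (simp add: prob_vecs_def flip: sum_divide_distrib)
  moreover have "(\<Prod>t<length xs. \<theta> (xs ! t)) \<le> ?R" if \<theta>: "\<theta> \<in> prob_vecs" for \<theta>
  proof (cases "\<forall>j\<in>set xs. 0 < \<theta> j")
    case True
    have "(\<Sum>j\<in>set xs. ?c j * ln (\<theta> j)) \<le> (\<Sum>j\<in>set xs. ?c j * ln (?c j / ?n))"
    proof -
      have "sum \<theta> (set xs) \<le> sum \<theta> UNIV"
        using \<theta> by (intro sum_mono2) (auto simp: prob_vecs_def)
      then have "sum \<theta> (set xs) \<le> 1" using \<theta> by (simp add: prob_vecs_def)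
      from gibbs_inequality[of "set xs" ?c \<theta>, OF _ _ _ this] True show ?thesis
        by (simp add: count_list_pos sum_count_list_set)
    qed
    moreover have "ln (\<Prod>j\<in>set xs. \<theta> j ^ count_list xs j) = (\<Sum>j\<in>set xs. ?c j * ln (\<theta> j))"
      using True by (subst ln_prod) (auto simp: ln_realpow)
    moreover have "ln ?R = (\<Sum>j\<in>set xs. ?c j * ln (?c j / ?n))"
      using n by (subst ln_prod) (auto simp: ln_realpow count_list_pos)
    ultimately have "ln (\<Prod>j\<in>set xs. \<theta> j ^ count_list xs j) \<le> ln ?R" by simp
    then show ?thesis unfolding lik using True R by (simp add: prod_pos)
  next
    case False
    then obtain j where "j \<in> set xs" "\<theta> j = 0"
      using \<theta> by (force simp: prob_vecs_def not_less intro: antisym)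
    then have "(\<Prod>j\<in>set xs. \<theta> j ^ count_list xs j) = 0" by (auto simp: count_list_pos)
    then show ?thesis unfolding lik using R by linarith
  qed
  ultimately show ?thesis
    unfolding max_lik_def by (intro cSup_eq_maximum) (force simp: lik)+
qed

lemma ln_max_lik:
  fixes xs :: "'a::finite list"
  assumes "xs \<noteq> []"
  shows "ln (max_lik xs) = (\<Sum>j\<in>set xs. real (count_list xs j) * ln (real (count_list xs j)))
    - real (length xs) * ln (real (length xs))"
proof -
  have "ln (max_lik xs) = (\<Sum>j\<in>set xs. real (count_list xs j) * (ln (real (count_list xs j)) - ln (real (length xs))))"
    using assms by (simp add: max_lik_eq ln_prod ln_realpow ln_div count_list_pos)
  also have "\<dots> = (\<Sum>j\<in>set xs. real (count_list xs j) * ln (real (count_list xs j)))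
      - real (length xs) * ln (real (length xs))"
    by (simp add: right_diff_distrib sum_subtractf sum_distrib_right[symmetric] sum_count_list_set)
  finally show ?thesis .
qed

section \<open>The sequential model \<open>S\<^sup>\<beta>\<close>\<close>

definition first_occurrences :: "'a list \<Rightarrow> nat set" where
  "first_occurrences xs = {t. t < length xs \<and> xs ! t \<notin> set (take t xs)}"

lemma CL_eq_sum_first_occurrences:
  "CL w xs = (\<Sum>t\<in>first_occurrences xs. ln (1 / w t (xs ! t)))"
  unfolding CL_def first_occurrences_def ..

lemma first_occurrences_subset: "first_occurrences xs \<subseteq> {..<length xs}"
  by (auto simp: first_occurrences_def)

lemma finite_first_occurrences: "finite (first_occurrences xs)"
  using first_occurrences_subset by (rule finite_subset) simp

lemma first_occurrences_snoc:
  "first_occurrences (xs @ [a]) =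
    (if a \<in> set xs then first_occurrences xs else insert (length xs) (first_occurrences xs))"
  by (auto simp: first_occurrences_def nth_append less_Suc_eq)

lemma S_prob_snoc:
  "S_prob \<beta> w (xs @ [a]) = S_prob \<beta> w xs *
     (if a \<in> set xs then real (count_list xs a) / (real (length xs) + \<beta>)
      else \<beta> * w (length xs) a / (real (length xs) + \<beta>))"
proof -
  have "S_prob \<beta> w (xs @ [a]) = (\<Prod>t<length xs. S_cond \<beta> w (xs @ [a]) t ((xs @ [a]) ! t)) *
      S_cond \<beta> w (xs @ [a]) (length xs) a"
    unfolding S_prob_def by (simp add: nth_append)
  also have "(\<Prod>t<length xs. S_cond \<beta> w (xs @ [a]) t ((xs @ [a]) ! t)) = S_prob \<beta> w xs"
    unfolding S_prob_def by (intro prod.cong) (auto simp: S_cond_def nth_append)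
  finally show ?thesis by (auto simp: S_cond_def cnt_def count_list_pos count_list_0_iff)
qed

lemma prod_first_occurrences_snoc:
  fixes f :: "nat \<Rightarrow> 'a \<Rightarrow> 'b::comm_monoid_mult"
  shows "(\<Prod>t\<in>first_occurrences (xs @ [a]). f t ((xs @ [a]) ! t)) =
    (if a \<in> set xs then 1 else f (length xs) a) * (\<Prod>t\<in>first_occurrences xs. f t (xs ! t))"
proof -
  have "(\<Prod>t\<in>first_occurrences xs. f t ((xs @ [a]) ! t)) = (\<Prod>t\<in>first_occurrences xs. f t (xs ! t))"
    using first_occurrences_subset[of xs] by (intro prod.cong) (auto simp: nth_append)
  moreover have "length xs \<notin> first_occurrences xs" using first_occurrences_subset[of xs] by auto
  ultimately show ?thesis by (simp add: first_occurrences_snoc finite_first_occurrences)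
qed

lemma prod_fact_count_list_snoc:
  "(\<Prod>j\<in>set (xs @ [a]). fact (count_list (xs @ [a]) j - 1) :: real) =
    (if a \<in> set xs then real (count_list xs a) else 1) * (\<Prod>j\<in>set xs. fact (count_list xs j - 1))"
proof (cases "a \<in> set xs")
  case True
  have "(\<Prod>j\<in>set xs - {a}. fact (count_list (xs @ [a]) j - 1) :: real)
      = (\<Prod>j\<in>set xs - {a}. fact (count_list xs j - 1))"
    by (intro prod.cong) auto
  then have "(\<Prod>j\<in>set xs. fact (count_list (xs @ [a]) j - 1) :: real)
      = fact (count_list xs a) * (\<Prod>j\<in>set xs - {a}. fact (count_list xs j - 1))"
    using True by (simp add: prod.remove)
  also have "\<dots> = real (count_list xs a) * (\<Prod>j\<in>set xs. fact (count_list xs j - 1))"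
    using True count_list_pos[OF True] by (simp add: prod.remove fact_reduce[of "count_list xs a"])
  finally show ?thesis using True by (simp add: insert_absorb)
next
  case False
  then have "(\<Prod>j\<in>set xs. fact (count_list (xs @ [a]) j - 1) :: real)
      = (\<Prod>j\<in>set xs. fact (count_list xs j - 1))"
    by (intro prod.cong) auto
  with False show ?thesis by simp
qed

lemma S_prob_mult_pochhammer:
  assumes "0 < \<beta>"
  shows "S_prob \<beta> w xs * pochhammer \<beta> (length xs) =
    \<beta> ^ card (set xs) * (\<Prod>t\<in>first_occurrences xs. w t (xs ! t))
      * (\<Prod>j\<in>set xs. fact (count_list xs j - 1))"
proof (induction xs rule: rev_induct)
  case Nil
  then show ?case by (simp add: S_prob_def first_occurrences_def)
next
  case (snoc a xs)
  let ?n = "length xs"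
  have "pochhammer \<beta> (length (xs @ [a])) = pochhammer \<beta> ?n * (real ?n + \<beta>)"
    by (simp add: pochhammer_Suc add.commute)
  moreover have "real ?n + \<beta> \<noteq> 0" using assms by simp
  ultimately have "S_prob \<beta> w (xs @ [a]) * pochhammer \<beta> (length (xs @ [a]))
      = S_prob \<beta> w xs * pochhammer \<beta> ?n * (if a \<in> set xs then real (count_list xs a) else \<beta> * w ?n a)"
    unfolding S_prob_snoc by (cases "a \<in> set xs") (simp_all add: field_simps)
  then show ?case
    unfolding snoc.IH prod_first_occurrences_snoc prod_fact_count_list_snoc
    by (cases "a \<in> set xs") (simp_all add: insert_absorb ac_simps)
qed

lemma S_prob_eq_Gamma:
  assumes \<beta>: "0 < \<beta>"
  shows "S_prob \<beta> w xs = \<beta> ^ card (set xs) * (\<Prod>t\<in>first_occurrences xs. w t (xs ! t))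
    * (\<Prod>j\<in>set xs. Gamma (real (count_list xs j))) * Gamma \<beta> / Gamma (real (length xs) + \<beta>)"
proof -
  have "pochhammer \<beta> (length xs) = Gamma (\<beta> + real (length xs)) / Gamma \<beta>"
    by (rule pochhammer_Gamma) (use \<beta> in \<open>auto simp: nonpos_Ints_def\<close>)
  then have poch: "pochhammer \<beta> (length xs) = Gamma (real (length xs) + \<beta>) / Gamma \<beta>"
    by (simp only: add.commute)
  have "0 < pochhammer \<beta> (length xs)" using \<beta> by (rule pochhammer_pos)
  then have nz: "pochhammer \<beta> (length xs) \<noteq> 0" by simp
  have fact_Gamma: "(\<Prod>j\<in>set xs. fact (count_list xs j - 1)) = (\<Prod>j\<in>set xs. Gamma (real (count_list xs j)))"
  proof (rule prod.cong)
    fix j assume j: "j \<in> set xs"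
    obtain k where "count_list xs j = Suc k" using gr0_implies_Suc[OF count_list_pos[OF j]] by blast
    then show "fact (count_list xs j - 1) = Gamma (real (count_list xs j))"
      using Gamma_fact[where 'a = real, of k] by (simp only: diff_Suc_1 of_nat_Suc)
  qed simp
  have "S_prob \<beta> w xs = S_prob \<beta> w xs * pochhammer \<beta> (length xs) / pochhammer \<beta> (length xs)"
    using nz by simp
  also have "\<dots> = \<beta> ^ card (set xs) * (\<Prod>t\<in>first_occurrences xs. w t (xs ! t))
      * (\<Prod>j\<in>set xs. fact (count_list xs j - 1)) / pochhammer \<beta> (length xs)"
    by (simp only: S_prob_mult_pochhammer[OF \<beta>])
  finally show ?thesis unfolding fact_Gamma poch by (simp only: divide_divide_eq_right)
qed

lemma ln_S_prob:
  assumes \<beta>: "0 < \<beta>" and w: "\<And>t. t \<in> first_occurrences xs \<Longrightarrow> 0 < w t (xs ! t)"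
  shows "0 < S_prob \<beta> w xs"
    and "ln (S_prob \<beta> w xs) = real (card (set xs)) * ln \<beta> - CL w xs
      + (\<Sum>j\<in>set xs. ln (Gamma (real (count_list xs j)))) + ln (Gamma \<beta>)
      - ln (Gamma (real (length xs) + \<beta>))"
proof -
  let ?W = "\<Prod>t\<in>first_occurrences xs. w t (xs ! t)" and ?G = "\<Prod>j\<in>set xs. Gamma (real (count_list xs j))"
  have \<Gamma>_count: "0 < Gamma (real (count_list xs j))" if "j \<in> set xs" for j
    using count_list_pos[OF that] by simp
  have W: "0 < ?W" using w by (intro prod_pos) auto
  have G: "0 < ?G" using \<Gamma>_count by (intro prod_pos) auto
  have \<Gamma>: "0 < Gamma \<beta>" "0 < Gamma (real (length xs) + \<beta>)" using \<beta> by simp_all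
  show "0 < S_prob \<beta> w xs" unfolding S_prob_eq_Gamma[OF \<beta>] using \<beta> W G \<Gamma> by simp
  have "ln ?W = (\<Sum>t\<in>first_occurrences xs. ln (w t (xs ! t)))"
    using w by (subst ln_prod) (auto simp: finite_first_occurrences dest: w)
  also have "\<dots> = - CL w xs"
    unfolding CL_eq_sum_first_occurrences sum_negf[symmetric]
    by (intro sum.cong) (simp_all add: ln_div w)
  finally have "ln ?W = - CL w xs" .
  moreover have "ln ?G = (\<Sum>j\<in>set xs. ln (Gamma (real (count_list xs j))))"
    by (subst ln_prod) (auto dest: \<Gamma>_count)
  moreover have "ln (a * b * c * d / e) = ln a + ln b + ln c + ln d - ln e"
    if "0 < a" "0 < b" "0 < c" "0 < d" "0 < e" for a b c d e :: real
    using that by (simp add: ln_mult_pos ln_div)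
  ultimately show "ln (S_prob \<beta> w xs) = real (card (set xs)) * ln \<beta> - CL w xs
      + (\<Sum>j\<in>set xs. ln (Gamma (real (count_list xs j)))) + ln (Gamma \<beta>)
      - ln (Gamma (real (length xs) + \<beta>))"
    unfolding S_prob_eq_Gamma[OF \<beta>] using \<beta> W G \<Gamma> by (simp add: ln_realpow)
qed

section \<open>The redundancy of \<open>S\<^sup>\<beta>\<close>\<close>

lemma redundancy_S_prob_eq:
  fixes xs :: "'a::finite list"
  assumes \<beta>: "0 < \<beta>" and xs: "xs \<noteq> []"
    and w: "\<And>t. t \<in> first_occurrences xs \<Longrightarrow> 0 < w t (xs ! t)"
  shows "redundancy (S_prob \<beta> w) xs =
      CL w xs - real (card (set xs)) * ln \<beta>
      + (\<Sum>j\<in>set xs. ln (real (count_list xs j) ^ count_list xs j / Gamma (real (count_list xs j))))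
      + ln (Gamma (real (length xs) + \<beta>) / (real (length xs) ^ length xs * Gamma \<beta>))"
proof -
  let ?n = "real (length xs)" and ?c = "\<lambda>j. real (count_list xs j)"
  have n: "0 < ?n" using xs by simp
  have "0 < max_lik xs"
    unfolding max_lik_eq[OF xs] using n by (intro prod_pos) (simp add: count_list_pos)
  then have "redundancy (S_prob \<beta> w) xs = ln (max_lik xs) - ln (S_prob \<beta> w xs)"
    unfolding redundancy_def using ln_S_prob(1)[where w = w and xs = xs, OF \<beta> w] by (simp add: ln_div)
  moreover have "ln (?c j ^ count_list xs j / Gamma (?c j)) = ?c j * ln (?c j) - ln (Gamma (?c j))"
    if "j \<in> set xs" for j
  proof -
    have "0 < ?c j" using count_list_pos[OF that] by simp
    then have "Gamma (?c j) \<noteq> 0" using Gamma_real_pos[of "?c j"] by linarith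
    with \<open>0 < ?c j\<close> show ?thesis by (simp add: ln_div ln_realpow)
  qed
  moreover have "Gamma (?n + \<beta>) \<noteq> 0" "Gamma \<beta> \<noteq> 0"
    using n \<beta> Gamma_real_pos[of "?n + \<beta>"] Gamma_real_pos[of \<beta>] by linarith+
  then have "ln (Gamma (?n + \<beta>) / (?n ^ length xs * Gamma \<beta>))
      = ln (Gamma (?n + \<beta>)) - ?n * ln ?n - ln (Gamma \<beta>)"
    using n \<beta> by (simp add: ln_div ln_mult ln_realpow)
  ultimately show ?thesis
    using ln_max_lik[OF xs] ln_S_prob(2)[where w = w and xs = xs, OF \<beta> w] by (simp add: sum_subtractf)
qed

lemma ln_pow_self_div_Gamma:
  assumes "0 < n"
  shows "ln (real n ^ n / Gamma (real n)) =
    1/2 * ln (real n / (2 * pi)) + real n + (ln (sqrt (2 * pi)) - stirling_gap (real n))"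
proof -
  have "Gamma (real n) \<noteq> 0" using assms Gamma_real_pos[of "real n"] by linarith
  then show ?thesis
    using assms by (simp add: stirling_gap_def ln_div ln_realpow ln_sqrt ln_mult_pos algebra_simps)
qed

lemma ln_Gamma_add_div:
  assumes n: "0 < n" and \<beta>: "0 < \<beta>"
  shows "ln (Gamma (real n + \<beta>) / (real n ^ n * Gamma \<beta>)) =
    real n * ln (1 + \<beta> / real n) + (\<beta> - 1/2) * ln (real n / \<beta> + 1) - real n
    + (stirling_gap (real n + \<beta>) - stirling_gap \<beta>)"
proof -
  have "1 + \<beta> / real n = (real n + \<beta>) / real n" "real n / \<beta> + 1 = (real n + \<beta>) / \<beta>"
    using assms by (simp_all add: field_simps)
  then have ln_ratios: "ln (1 + \<beta> / real n) = ln (real n + \<beta>) - ln (real n)"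
    "ln (real n / \<beta> + 1) = ln (real n + \<beta>) - ln \<beta>"
    using assms by (simp_all add: ln_div)
  have "Gamma (real n + \<beta>) \<noteq> 0" "Gamma \<beta> \<noteq> 0"
    using assms Gamma_real_pos[of "real n + \<beta>"] Gamma_real_pos[of \<beta>] by linarith+
  then have "ln (Gamma (real n + \<beta>) / (real n ^ n * Gamma \<beta>))
      = ln (Gamma (real n + \<beta>)) - real n * ln (real n) - ln (Gamma \<beta>)"
    using n by (simp add: ln_div ln_mult ln_realpow)
  then show ?thesis unfolding ln_ratios stirling_gap_def by (simp add: algebra_simps)
qed

definition redundancy_bound :: "real \<Rightarrow> (nat \<Rightarrow> 'a \<Rightarrow> real) \<Rightarrow> 'a list \<Rightarrow> real" where
  "redundancy_bound \<beta> w xs =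
      CL w xs - real (card (set xs)) * ln \<beta>
      + (\<Sum>j\<in>set xs. (1/2) * ln (real (count_list xs j) / (2 * pi)))
      + real (length xs) * ln (1 + \<beta> / real (length xs))
      + (\<beta> - 1/2) * ln (real (length xs) / \<beta> + 1)
      + (1 - ln (sqrt (2 * pi)))"

lemma redundancy_S_prob_stirling:
  fixes xs :: "'a::finite list"
  assumes \<beta>: "0 < \<beta>" and xs: "xs \<noteq> []"
    and w: "\<And>t. t \<in> first_occurrences xs \<Longrightarrow> 0 < w t (xs ! t)"
  shows "redundancy (S_prob \<beta> w) xs = redundancy_bound \<beta> w xs - (1 - ln (sqrt (2 * pi)))
    + (\<Sum>j\<in>set xs. ln (sqrt (2 * pi)) - stirling_gap (real (count_list xs j)))
    + (stirling_gap (real (length xs) + \<beta>) - stirling_gap \<beta>)"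
proof -
  have "(\<Sum>j\<in>set xs. ln (real (count_list xs j) ^ count_list xs j / Gamma (real (count_list xs j))))
      = (\<Sum>j\<in>set xs. 1/2 * ln (real (count_list xs j) / (2 * pi))) + real (length xs)
        + (\<Sum>j\<in>set xs. ln (sqrt (2 * pi)) - stirling_gap (real (count_list xs j)))"
    by (simp add: ln_pow_self_div_Gamma count_list_pos sum.distrib sum_count_list_set)
  then show ?thesis
    using xs \<beta>
    by (simp add: redundancy_S_prob_eq[where w = w, OF \<beta> xs w] ln_Gamma_add_div redundancy_bound_def)
qed

lemma ln_sqrt_2pi_le_one: "ln (sqrt (2 * pi)) \<le> 1"
  using stirling_gap_lower_bound[of 1] by (simp add: stirling_gap_one)

lemma redundancy_S_prob_le:
  fixes xs :: "'a::finite list"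
  assumes \<beta>: "0 < \<beta>" and xs: "xs \<noteq> []"
    and w: "\<And>t. t \<in> first_occurrences xs \<Longrightarrow> 0 < w t (xs ! t)"
  shows "redundancy (S_prob \<beta> w) xs \<le> redundancy_bound \<beta> w xs"
proof -
  have "(\<Sum>j\<in>set xs. ln (sqrt (2 * pi)) - stirling_gap (real (count_list xs j))) \<le> 0"
    by (intro sum_nonpos) (simp add: stirling_gap_lower_bound count_list_pos)
  moreover have "stirling_gap (real (length xs) + \<beta>) \<le> stirling_gap \<beta>"
    using \<beta> by (intro stirling_gap_antimono) auto
  ultimately show ?thesis
    using redundancy_S_prob_stirling[where w = w, OF assms] ln_sqrt_2pi_le_one by linarith
qed

lemma redundancy_S_prob_ge:
  fixes xs :: "'a::finite list"
  assumes \<beta>: "1 \<le> \<beta>" and xs: "xs \<noteq> []"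
    and w: "\<And>t. t \<in> first_occurrences xs \<Longrightarrow> 0 < w t (xs ! t)"
  shows "redundancy_bound \<beta> w xs - (1 - ln (sqrt (2 * pi))) * (real (card (set xs)) + 2)
    \<le> redundancy (S_prob \<beta> w) xs"
proof -
  let ?L = "ln (sqrt (2 * pi))"
  define X where "X = (1 - ?L) * real (card (set xs))"
  define S where "S = (\<Sum>j\<in>set xs. ?L - stirling_gap (real (count_list xs j)))"
  have "stirling_gap (real (count_list xs j)) \<le> 1" if "j \<in> set xs" for j
    using stirling_gap_antimono[of 1 "real (count_list xs j)"] count_list_pos[OF that]
    by (simp add: stirling_gap_one)
  then have "(\<Sum>j\<in>set xs. ?L - 1) \<le> S" unfolding S_def by (intro sum_mono) simp
  moreover have "(\<Sum>j\<in>set xs. ?L - 1) = - X" by (simp add: X_def algebra_simps)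
  ultimately have "- X \<le> S" by simp
  moreover have "?L \<le> stirling_gap (real (length xs) + \<beta>)"
    using \<beta> by (intro stirling_gap_lower_bound) simp
  moreover have "stirling_gap \<beta> \<le> 1"
    using stirling_gap_antimono[of 1 \<beta>] \<beta> by (simp add: stirling_gap_one)
  moreover have "redundancy (S_prob \<beta> w) xs = redundancy_bound \<beta> w xs - (1 - ?L) + S
      + (stirling_gap (real (length xs) + \<beta>) - stirling_gap \<beta>)"
    unfolding S_def using \<beta> xs w by (intro redundancy_S_prob_stirling) auto
  ultimately have "redundancy_bound \<beta> w xs - X - 2 + 2 * ?L \<le> redundancy (S_prob \<beta> w) xs"
    by linarith
  moreover have "(1 - ?L) * (real (card (set xs)) + 2) = X + 2 - 2 * ?L"
    by (simp add: X_def algebra_simps)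
  ultimately show ?thesis by simp
qed

theorem proposition1:
  fixes \<beta> :: real and xs :: "'a::finite list" and w :: "nat \<Rightarrow> 'a \<Rightarrow> real"
  assumes beta_pos: "\<beta> > 0"
    and n_pos: "length xs \<ge> 1"
    and weights: "valid_weights w (length xs) xs"
  shows
   "redundancy (S_prob \<beta> w) xs =
      CL w xs - real (card (set xs)) * ln \<beta>
      + (\<Sum>j\<in>set xs. ln (real (count_list xs j) ^ count_list xs j / Gamma (real (count_list xs j))))
      + ln (Gamma (real (length xs) + \<beta>) / (real (length xs) ^ length xs * Gamma \<beta>))
    \<and> redundancy (S_prob \<beta> w) xs \<le>
      CL w xs - real (card (set xs)) * ln \<beta>
      + (\<Sum>j\<in>set xs. (1/2) * ln (real (count_list xs j) / (2 * pi)))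
      + real (length xs) * ln (1 + \<beta> / real (length xs))
      + (\<beta> - 1/2) * ln (real (length xs) / \<beta> + 1)
      + (1 - ln (sqrt (2 * pi)))
    \<and> (\<beta> \<ge> 1 \<longrightarrow>
      redundancy (S_prob \<beta> w) xs \<ge>
      CL w xs - real (card (set xs)) * ln \<beta>
      + (\<Sum>j\<in>set xs. (1/2) * ln (real (count_list xs j) / (2 * pi)))
      + real (length xs) * ln (1 + \<beta> / real (length xs))
      + (\<beta> - 1/2) * ln (real (length xs) / \<beta> + 1)
      + (1 - ln (sqrt (2 * pi)))
      - (1 - ln (sqrt (2 * pi))) * (real (card (set xs)) + 2))"
proof -
  have xs: "xs \<noteq> []" using n_pos by auto
  have w: "0 < w t (xs ! t)" if "t \<in> first_occurrences xs" for t
    using that weights by (auto simp: valid_weights_def first_occurrences_def)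
  show ?thesis
    using redundancy_S_prob_eq[where w = w, OF beta_pos xs w]
      redundancy_S_prob_le[where w = w, OF beta_pos xs w]
      redundancy_S_prob_ge[where w = w, OF _ xs w]
    unfolding redundancy_bound_def by blast
qed

end
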